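(* Let $H$ be the face algebra described in the context. Then the braided Hopf algebra ${}_RH=C_H(H_s)$ is the $\mathbb C$-linear span of $\{X^i_i(p):i,p\in\mathbb Z_N\}$, with $$X^i_i(p)X^k_k(q)=\delta_{i,k}\delta_{p,q}X^i_i(p),\qquad 1=\sum_{i,p}X^i_i(p),$$ $$\underline\Delta(X^k_k(s))=\sum_{w+q=s}X^k_k(w)\otimes X^k_k(q),\qquad \varepsilon_t(X^i_i(s))=\delta_{s,0}\sum_pX^i_i(p),\qquad \underline S(X^k_k(s))=X^k_k(-s).$$
   Context: Let $N\ge2$, $\mathbb Z_N=\mathbb Z/N\mathbb Z$, $\omega\in\mathbb C$ a primitive $N$th root of unity. $H$ is the $\mathbb C$-vector space with basis $\{X^i_j(s):i,j,s\in\mathbb Z_N\}$, with multiplication $X^i_j(p)X^k_l(q)=\delta_{j,k}\delta_{p,q}X^i_l(p)$, unit $1=\sum_{i,p}X^i_i(p)$, comultiplication $\Delta(X^i_j(s))=\sum_{p+q=s}X^i_j(p)\otimes X^{i+p}_{j+p}(q)$, counit $\varepsilon(X^i_j(s))=\delta_{s,0}$, antipode $S(X^i_j(p))=X^{j+p}_{i+p}(-p)$, and $R=\sum_{i,j,p}X^i_j(p)\otimes X^j_{j+p}(i-j)\omega^{-p(i-j)}$, $\bar R=\sum_{i,j,p}X^{j+p}_{i+p}(-p)\otimes X^j_{j+p}(i-j)\omega^{-p(i-j)}$; $(H,R)$ is a quasitriangular weak Hopf algebra (Hayashi's face algebra). Its target subalgebra $H_t=\varepsilon_t(H)$, $\varepsilon_t(h)=\varepsilon(1_1h)1_2$,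 is $\bigoplus_i\mathbb C1^i$ with $1^i=\sum_pX^i_i(p)$; $\varepsilon_s(h)=1_1\varepsilon(h1_2)$, $H_s=\varepsilon_s(H)$. For a quasitriangular weak Hopf algebra, ${}_RH$ denotes $C_H(H_s)=\{1_1hS(1_2):h\in H\}$ with adjoint action $h\cdot x=h_1xS(h_2)$, multiplication $a\otimes b\mapsto(1_1\cdot a)(1_2\cdot b)$, comultiplication $\underline\Delta(x)=x_1S(R^2)\otimes R^1\cdot x_2$, counit $\varepsilon_t$, antipode $\underline S(x)=R^2R'^2S(R^1xS(R'^1))$ ($R'$ another copy of $R$). *)

theory Defs
  imports Complex_Main
begin

text \<open>Indices are integers read modulo N;
  the canonical basis labels are B N = {0..<N}^3. An element of H is a function
  on int*int*int with complex values vanishing outside B N (its coordinates in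
  the basis X^i_j(s)); an element of H (x) H is a function on pairs of labels
  (coordinates in the basis X_x (x) X_y).\<close>

type_synonym lbl = "int \<times> int \<times> int"
type_synonym hvec = "lbl \<Rightarrow> complex"
type_synonym tvec = "lbl \<times> lbl \<Rightarrow> complex"

definition B :: "int \<Rightarrow> lbl set" where
  "B N = {0..<N} \<times> {0..<N} \<times> {0..<N}"

definition Hsp :: "int \<Rightarrow> hvec set" where
  "Hsp N = {f. \<forall>x. x \<notin> B N \<longrightarrow> f x = 0}"

definition Xv :: "int \<Rightarrow> int \<Rightarrow> int \<Rightarrow> int \<Rightarrow> hvec" where
  "Xv N i j s = (\<lambda>x. if x = (i mod N, j mod N, s mod N) then 1 else 0)"

definition Xb :: "int \<Rightarrow> lbl \<Rightarrow> hvec" where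
  "Xb N x = (case x of (i, j, s) \<Rightarrow> Xv N i j s)"

definition tens :: "hvec \<Rightarrow> hvec \<Rightarrow> tvec" where
  "tens a b = (\<lambda>(x, y). a x * b y)"

definition mX :: "int \<Rightarrow> lbl \<Rightarrow> lbl \<Rightarrow> hvec" where
  "mX N x y = (case x of (i, j, p) \<Rightarrow> case y of (k, l, q) \<Rightarrow>
     if j mod N = k mod N \<and> p mod N = q mod N then Xv N i l p else (\<lambda>_. 0))"

definition hmult :: "int \<Rightarrow> hvec \<Rightarrow> hvec \<Rightarrow> hvec" where
  "hmult N a b = (\<lambda>z. \<Sum>x\<in>B N. \<Sum>y\<in>B N. a x * b y * mX N x y z)"

definition Hone :: "int \<Rightarrow> hvec" where
  "Hone N = (\<lambda>z. \<Sum>i\<in>{0..<N}. \<Sum>p\<in>{0..<N}. Xv N i i p z)"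

definition DX :: "int \<Rightarrow> lbl \<Rightarrow> tvec" where
  "DX N x = (case x of (i, j, s) \<Rightarrow> (\<lambda>w. \<Sum>p\<in>{0..<N}. \<Sum>q\<in>{0..<N}.
     if (p + q) mod N = s mod N then tens (Xv N i j p) (Xv N (i + p) (j + p) q) w else 0))"

definition Delta :: "int \<Rightarrow> hvec \<Rightarrow> tvec" where
  "Delta N a = (\<lambda>w. \<Sum>x\<in>B N. a x * DX N x w)"

definition epsX :: "int \<Rightarrow> lbl \<Rightarrow> complex" where
  "epsX N x = (case x of (i, j, s) \<Rightarrow> if s mod N = 0 then 1 else 0)"

definition eps :: "int \<Rightarrow> hvec \<Rightarrow> complex" where
  "eps N a = (\<Sum>x\<in>B N. a x * epsX N x)"

definition SX :: "int \<Rightarrow> lbl \<Rightarrow> hvec" where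
  "SX N x = (case x of (i, j, p) \<Rightarrow> Xv N (j + p) (i + p) (- p))"

definition Sant :: "int \<Rightarrow> hvec \<Rightarrow> hvec" where
  "Sant N a = (\<lambda>z. \<Sum>x\<in>B N. a x * SX N x z)"

definition Rmat :: "int \<Rightarrow> complex \<Rightarrow> tvec" where
  "Rmat N \<omega> = (\<lambda>w. \<Sum>i\<in>{0..<N}. \<Sum>j\<in>{0..<N}. \<Sum>p\<in>{0..<N}.
     tens (Xv N i j p) (Xv N j (j + p) (i - j)) w * \<omega> powi (- (p * (i - j))))"

text \<open>counital maps: eps_t(h) = eps(1_1 h) 1_2, eps_s(h) = 1_1 eps(h 1_2)\<close>
definition eps_t :: "int \<Rightarrow> hvec \<Rightarrow> hvec" where
  "eps_t N h = (\<lambda>z. \<Sum>(x, y)\<in>B N \<times> B N.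
     Delta N (Hone N) (x, y) * eps N (hmult N (Xb N x) h) * Xb N y z)"

definition eps_s :: "int \<Rightarrow> hvec \<Rightarrow> hvec" where
  "eps_s N h = (\<lambda>z. \<Sum>(x, y)\<in>B N \<times> B N.
     Delta N (Hone N) (x, y) * eps N (hmult N h (Xb N y)) * Xb N x z)"

definition Hs :: "int \<Rightarrow> hvec set" where
  "Hs N = eps_s N ` Hsp N"

definition RH :: "int \<Rightarrow> hvec set" where
  "RH N = {a \<in> Hsp N. \<forall>y\<in>Hs N. hmult N a y = hmult N y a}"

text \<open>adjoint action h . x = h_1 x S(h_2)\<close>
definition adj :: "int \<Rightarrow> hvec \<Rightarrow> hvec \<Rightarrow> hvec" where
  "adj N h a = (\<lambda>z. \<Sum>(x, y)\<in>B N \<times> B N.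
     Delta N h (x, y) * hmult N (hmult N (Xb N x) a) (Sant N (Xb N y)) z)"

text \<open>braided multiplication a (x) b -> (1_1 . a)(1_2 . b)\<close>
definition bmult :: "int \<Rightarrow> hvec \<Rightarrow> hvec \<Rightarrow> hvec" where
  "bmult N a b = (\<lambda>z. \<Sum>(x, y)\<in>B N \<times> B N.
     Delta N (Hone N) (x, y) * hmult N (adj N (Xb N x) a) (adj N (Xb N y) b) z)"

text \<open>braided comultiplication x -> x_1 S(R^2) (x) R^1 . x_2\<close>
definition bDelta :: "int \<Rightarrow> complex \<Rightarrow> hvec \<Rightarrow> tvec" where
  "bDelta N \<omega> a = (\<lambda>w. \<Sum>(x1, x2)\<in>B N \<times> B N. \<Sum>(r1, r2)\<in>B N \<times> B N.
     Delta N a (x1, x2) * Rmat N \<omega> (r1, r2) *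
     tens (hmult N (Xb N x1) (Sant N (Xb N r2))) (adj N (Xb N r1) (Xb N x2)) w)"

text \<open>braided antipode x -> R^2 R'^2 S(R^1 x S(R'^1))\<close>
definition bS :: "int \<Rightarrow> complex \<Rightarrow> hvec \<Rightarrow> hvec" where
  "bS N \<omega> a = (\<lambda>z. \<Sum>(r1, r2)\<in>B N \<times> B N. \<Sum>(s1, s2)\<in>B N \<times> B N.
     Rmat N \<omega> (r1, r2) * Rmat N \<omega> (s1, s2) *
     hmult N (hmult N (Xb N r2) (Xb N s2))
       (Sant N (hmult N (hmult N (Xb N r1) a) (Sant N (Xb N s1)))) z)"

definition diag_span :: "int \<Rightarrow> hvec set" where
  "diag_span N = {(\<lambda>z. \<Sum>i\<in>{0..<N}. \<Sum>p\<in>{0..<N}. c i p * Xv N i i p z) | c. True}"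

end

theory Submission
  imports Defs
begin

text \<open>H_s contains e_m = eps_s(X^0_m(0)) = sum over i + a = m of X^i_i(a).
  Multiplying X^i_j(p) by e_m on the right gives the factor [j + p = m], on the left the factor
  [i + p = m]; hence commuting with e_(i+p) kills every off-diagonal coefficient, while diagonal
  elements commute with H_s because H_s is itself diagonal. On diagonal basis elements the adjoint
  action of X^i_j(a) vanishes unless a = 0, so the braided product is the ordinary one; in the
  braided coproduct and antipode a single term of R survives, and in the antipode the phases
  \<omega>^(s^2) and \<omega>^(-s^2) of the two surviving R-terms cancel.\<close>

lemma residue_eq_iff_dvd:
  fixes a c N :: int
  assumes "a \<in> {0..<N}"
  shows "a = c mod N \<longleftrightarrow> N dvd a - c"
  using assms by (simp flip: mod_eq_dvd_iff)

lemma residue_eq_0_iff_dvd: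
  fixes a N :: int
  assumes "a \<in> {0..<N}"
  shows "a = 0 \<longleftrightarrow> N dvd a"
  using assms by (auto simp: dvd_eq_mod_eq_0)

lemma power_int_eq_1_if_dvd:
  fixes \<omega> :: "'a::division_ring" and N e :: int
  assumes "0 < N" and "\<omega> ^ nat N = 1" and "N dvd e"
  shows "\<omega> powi e = 1"
proof -
  obtain m where "e = N * m" using assms(3) by (rule dvdE)
  moreover have "\<omega> powi N = 1" using assms(1,2) by (simp add: power_int_def)
  ultimately show ?thesis by (simp add: power_int_mult)
qed

lemma if_zero_mult [simp]:
  fixes a b :: "'a::mult_zero"
  shows "(if c then a else 0) * b = (if c then a * b else 0)"
    and "b * (if c then a else 0) = (if c then b * a else 0)"
  by simp_all

lemma if_zero_cong: "(P \<longleftrightarrow> Q) \<Longrightarrow> (Q \<Longrightarrow> x = y) \<Longrightarrow> (if P then x else 0) = (if Q then y else 0)"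
  by simp

lemma sum_if_eq_conj:
  "finite A \<Longrightarrow> (\<Sum>x\<in>A. if x = c \<and> P x then f x else 0) = (if P c \<and> c \<in> A then f c else 0)"
  by (simp add: if_if_eq_conj[symmetric] cong: if_cong)

lemma sum_swap_outer:
  "(\<Sum>p\<in>P. \<Sum>a\<in>A. \<Sum>b\<in>C. g p a b) = (\<Sum>a\<in>A. \<Sum>b\<in>C. \<Sum>p\<in>P. g p a b)"
  by (simp add: sum.swap[of _ P])

lemma sum_prod_swap:
  "(\<Sum>(x,y)\<in>A \<times> C. \<Sum>p\<in>P. g x y p) = (\<Sum>p\<in>P. \<Sum>(x,y)\<in>A \<times> C. g x y p)"
  by (subst sum.swap) (simp add: case_prod_beta)

lemma finite_B [simp]: "finite (B N)"
  by (simp add: B_def)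

lemma Xb_triple [simp]: "Xb N (i, j, s) = Xv N i j s"
  by (simp add: Xb_def)

lemma hmult_if_zero:
  "hmult N (if c then f else (\<lambda>_. 0)) g = (if c then hmult N f g else (\<lambda>_. 0))"
  "hmult N g (if c then f else (\<lambda>_. 0)) = (if c then hmult N g f else (\<lambda>_. 0))"
  by (simp_all add: hmult_def)

lemma Sant_if_zero: "Sant N (if c then f else (\<lambda>_. 0)) = (if c then Sant N f else (\<lambda>_. 0))"
  by (simp add: Sant_def)

lemma tens_if_zero:
  "tens (if c then f else (\<lambda>_. 0)) g = (if c then tens f g else (\<lambda>_. 0))"
  "tens g (if c then f else (\<lambda>_. 0)) = (if c then tens g f else (\<lambda>_. 0))"
  by (auto simp: tens_def)

lemma eps_zero [simp]: "eps N (\<lambda>_. 0) = 0"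
  by (simp add: eps_def)

lemma hmult_sum_left: "hmult N (\<lambda>z. \<Sum>k\<in>K. F k z) g = (\<lambda>z. \<Sum>k\<in>K. hmult N (F k) g z)"
  unfolding hmult_def by (simp add: sum_distrib_right sum_swap_outer[where P=K, symmetric])

lemma hmult_sum_right: "hmult N g (\<lambda>z. \<Sum>k\<in>K. F k z) = (\<lambda>z. \<Sum>k\<in>K. hmult N g (F k) z)"
  unfolding hmult_def
  by (simp add: sum_distrib_right sum_distrib_left sum_swap_outer[where P=K, symmetric])

lemma hmult_scale_left: "hmult N (\<lambda>z. c * f z) g = (\<lambda>z. c * hmult N f g z)"
  unfolding hmult_def by (simp add: sum_distrib_left mult_ac)

lemma hmult_scale_right: "hmult N g (\<lambda>z. c * f z) = (\<lambda>z. c * hmult N g f z)"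
  unfolding hmult_def by (simp add: sum_distrib_left mult_ac)

lemma adj_sum_right: "adj N h (\<lambda>z. \<Sum>k\<in>K. F k z) = (\<lambda>z. \<Sum>k\<in>K. adj N h (F k) z)"
  unfolding adj_def hmult_sum_right hmult_sum_left by (simp add: sum_distrib_left sum_prod_swap)

lemma adj_scale_right: "adj N h (\<lambda>z. c * f z) = (\<lambda>z. c * adj N h f z)"
  unfolding adj_def hmult_scale_right hmult_scale_left
  by (simp add: sum_distrib_left mult_ac case_prod_beta)

lemma bmult_sum_left: "bmult N (\<lambda>z. \<Sum>k\<in>K. F k z) g = (\<lambda>z. \<Sum>k\<in>K. bmult N (F k) g z)"
  unfolding bmult_def adj_sum_right hmult_sum_left by (simp add: sum_distrib_left sum_prod_swap)

lemma bmult_sum_right: "bmult N g (\<lambda>z. \<Sum>k\<in>K. F k z) = (\<lambda>z. \<Sum>k\<in>K. bmult N g (F k) z)"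
  unfolding bmult_def adj_sum_right hmult_sum_right by (simp add: sum_distrib_left sum_prod_swap)

lemma bmult_scale_left: "bmult N (\<lambda>z. c * f z) g = (\<lambda>z. c * bmult N f g z)"
  unfolding bmult_def adj_scale_right hmult_scale_left
  by (simp add: sum_distrib_left mult_ac case_prod_beta)

lemma bmult_scale_right: "bmult N g (\<lambda>z. c * f z) = (\<lambda>z. c * bmult N g f z)"
  unfolding bmult_def adj_scale_right hmult_scale_right
  by (simp add: sum_distrib_left mult_ac case_prod_beta)

definition diag :: "int \<Rightarrow> (int \<Rightarrow> int \<Rightarrow> complex) \<Rightarrow> hvec" where
  "diag N c = (\<lambda>z. \<Sum>i\<in>{0..<N}. \<Sum>p\<in>{0..<N}. c i p * Xv N i i p z)"

lemma diag_span_eq_range_diag: "diag_span N = range (diag N)"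
  unfolding diag_span_def diag_def by auto

lemma Hone_eq_diag: "Hone N = diag N (\<lambda>_ _. 1)"
  unfolding Hone_def diag_def by simp

locale face_algebra =
  fixes N :: int
  assumes N_pos: "0 < N"
begin

lemma Xv_mod_simps [simp]:
  "Xv N (i mod N) j s = Xv N i j s" "Xv N i (j mod N) s = Xv N i j s"
  "Xv N i j (s mod N) = Xv N i j s"
  "Xv N (i mod N + a) j s = Xv N (i + a) j s" "Xv N i (j mod N + a) s = Xv N i (j + a) s"
  by (simp_all add: Xv_def mod_add_left_eq)

lemma Xv_cong:
  "i mod N = i' mod N \<Longrightarrow> j mod N = j' mod N \<Longrightarrow> s mod N = s' mod N \<Longrightarrow> Xv N i j s = Xv N i' j' s'"
  by (simp add: Xv_def)

lemma Xv_in_Hsp: "Xv N i j s \<in> Hsp N"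
  using N_pos by (auto simp: Hsp_def Xv_def B_def)

lemma sum_B_Xv_mult: "(\<Sum>x\<in>B N. Xv N i j s x * G x) = G (i mod N, j mod N, s mod N)"
proof -
  have "(\<Sum>x\<in>B N. Xv N i j s x * G x) = (\<Sum>x\<in>B N. if x = (i mod N, j mod N, s mod N) then G x else 0)"
    by (rule sum.cong) (auto simp: Xv_def)
  also have "\<dots> = G (i mod N, j mod N, s mod N)"
    using N_pos by (simp add: B_def)
  finally show ?thesis .
qed

lemma sum_tens_Xv_mult:
  "(\<Sum>(x,y)\<in>B N \<times> B N. tens (Xv N i j s) (Xv N k l q) (x,y) * G x y)
     = G (i mod N, j mod N, s mod N) (k mod N, l mod N, q mod N)"
  by (simp add: sum.cartesian_product[symmetric] tens_def mult.assoc sum_distrib_left[symmetric]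
      sum_B_Xv_mult)

lemma hmult_Xv: "hmult N (Xv N i j p) (Xv N k l q) =
   (if j mod N = k mod N \<and> p mod N = q mod N then Xv N i l p else (\<lambda>_. 0))"
proof -
  have "hmult N (Xv N i j p) (Xv N k l q) = mX N (i mod N, j mod N, p mod N) (k mod N, l mod N, q mod N)"
    unfolding hmult_def
    by (simp add: mult.assoc sum_distrib_left[symmetric] sum_B_Xv_mult mult.commute[of _ "Xv N k l q _"])
  then show ?thesis by (auto simp: mX_def intro: Xv_cong)
qed

lemma Sant_Xv: "Sant N (Xv N i j p) = Xv N (j + p) (i + p) (- p)"
  unfolding Sant_def by (simp add: sum_B_Xv_mult SX_def)
    (rule Xv_cong, simp_all add: mod_add_eq mod_minus_eq mod_add_right_eq)

lemma eps_Xv: "eps N (Xv N i j s) = (if s mod N = 0 then 1 else 0)"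
  unfolding eps_def by (simp add: sum_B_Xv_mult epsX_def)

lemma sum_Delta_Xv_mult:
  "(\<Sum>(x,y)\<in>B N \<times> B N. Delta N (Xv N i j s) (x,y) * F x y) =
   (\<Sum>p\<in>{0..<N}. \<Sum>q\<in>{0..<N}. if (p + q) mod N = s mod N
      then F (i mod N, j mod N, p) ((i + p) mod N, (j + p) mod N, q) else 0)"
proof -
  have "(\<Sum>(x,y)\<in>B N \<times> B N. Delta N (Xv N i j s) (x,y) * F x y) =
    (\<Sum>(x,y)\<in>B N \<times> B N. \<Sum>p\<in>{0..<N}. \<Sum>q\<in>{0..<N}. if (p + q) mod N = s mod N then
       tens (Xv N i j p) (Xv N (i + p) (j + p) q) (x,y) * F x y else 0)"
    unfolding Delta_def by (simp add: sum_B_Xv_mult DX_def sum_distrib_right cong: if_cong)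
  also have "\<dots> = (\<Sum>p\<in>{0..<N}. \<Sum>q\<in>{0..<N}. if (p + q) mod N = s mod N then
       \<Sum>(x,y)\<in>B N \<times> B N. tens (Xv N i j p) (Xv N (i + p) (j + p) q) (x,y) * F x y else 0)"
    by (simp only: sum_prod_swap) (intro sum.cong refl; simp)
  finally show ?thesis
    by (simp add: sum_tens_Xv_mult cong: if_cong)
qed

lemma sum_Delta_Hone_mult:
  "(\<Sum>(x,y)\<in>B N \<times> B N. Delta N (Hone N) (x,y) * F x y) =
   (\<Sum>i\<in>{0..<N}. \<Sum>a\<in>{0..<N}. \<Sum>b\<in>{0..<N}. F (i, i, a) ((i + a) mod N, (i + a) mod N, b))"
proof -
  have Delta_Hone: "Delta N (Hone N) w = (\<Sum>i\<in>{0..<N}. \<Sum>p\<in>{0..<N}. Delta N (Xv N i i p) w)" for w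
    unfolding Delta_def Hone_def by (simp add: sum_distrib_right sum.swap[of _ "B N"])
  have "(\<Sum>(x,y)\<in>B N \<times> B N. Delta N (Hone N) (x,y) * F x y) =
      (\<Sum>i\<in>{0..<N}. \<Sum>p\<in>{0..<N}. \<Sum>(x,y)\<in>B N \<times> B N. Delta N (Xv N i i p) (x,y) * F x y)"
    by (simp only: Delta_Hone sum_distrib_right sum_prod_swap)
  also have "\<dots> = (\<Sum>i\<in>{0..<N}. \<Sum>p\<in>{0..<N}. \<Sum>a\<in>{0..<N}. \<Sum>b\<in>{0..<N}.
      if (a + b) mod N = p mod N then F (i, i, a) ((i + a) mod N, (i + a) mod N, b) else 0)"
    by (simp add: sum_Delta_Xv_mult cong: if_cong)
  also have "\<dots> = (\<Sum>i\<in>{0..<N}. \<Sum>a\<in>{0..<N}. \<Sum>b\<in>{0..<N}. \<Sum>p\<in>{0..<N}.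
      if (a + b) mod N = p mod N then F (i, i, a) ((i + a) mod N, (i + a) mod N, b) else 0)"
    by (rule sum.cong[OF refl], rule sum_swap_outer)
  finally show ?thesis by simp
qed

lemma sum_Rmat_mult:
  "(\<Sum>(r1,r2)\<in>B N \<times> B N. Rmat N \<omega> (r1,r2) * F r1 r2) =
   (\<Sum>i\<in>{0..<N}. \<Sum>j\<in>{0..<N}. \<Sum>p\<in>{0..<N}.
      \<omega> powi (- (p * (i - j))) * F (i, j, p) (j, (j + p) mod N, (i - j) mod N))"
  unfolding Rmat_def
  by (simp add: sum_distrib_right sum_prod_swap mult.assoc sum_tens_Xv_mult)

lemma adj_Xv: "adj N (Xv N i j p) (Xv N k l q) =
  (if p mod N = 0 \<and> j mod N = k mod N \<and> l mod N = k mod N then Xv N i i q else (\<lambda>_. 0))"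
proof
  fix z
  have "adj N (Xv N i j p) (Xv N k l q) z = (\<Sum>a\<in>{0..<N}. \<Sum>b\<in>{0..<N}. if (a + b) mod N = p mod N
      then hmult N (hmult N (Xv N i j a) (Xv N k l q)) (Sant N (Xv N (i + a) (j + a) b)) z else 0)"
    unfolding adj_def by (simp add: sum_Delta_Xv_mult cong: if_cong)
  also have "\<dots> = (\<Sum>a\<in>{0..<N}. \<Sum>b\<in>{0..<N}. if b = (- q) mod N \<and> a = q mod N \<and>
      (p mod N = 0 \<and> j mod N = k mod N \<and> l mod N = k mod N) then Xv N i i q z else 0)"
  proof (intro sum.cong refl)
    fix a b assume a: "a \<in> {0..<N}" and b: "b \<in> {0..<N}"
    show "(if (a + b) mod N = p mod N
      then hmult N (hmult N (Xv N i j a) (Xv N k l q)) (Sant N (Xv N (i + a) (j + a) b)) z else 0) =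
      (if b = (- q) mod N \<and> a = q mod N \<and>
      (p mod N = 0 \<and> j mod N = k mod N \<and> l mod N = k mod N) then Xv N i i q z else 0)"
      apply (simp only: hmult_Xv Sant_Xv hmult_if_zero if_distribR if_if_eq_conj)
      apply (rule if_zero_cong)
      \<comment> \<open>with congruences written as divisibilities, each step is an ideal membership for algebra\<close>
      subgoal
        unfolding residue_eq_iff_dvd[OF a] residue_eq_iff_dvd[OF b] mod_eq_dvd_iff dvd_eq_mod_eq_0[symmetric]
        by (intro iffI conjI; elim conjE; (assumption | algebra))
      subgoal
        unfolding residue_eq_iff_dvd[OF a] residue_eq_iff_dvd[OF b]
        by (elim conjE, rule fun_cong[OF Xv_cong]; unfold mod_eq_dvd_iff; (assumption | algebra | simp))
      done
  qed
  also have "\<dots> = (if p mod N = 0 \<and> j mod N = k mod N \<and> l mod N = k mod N then Xv N i i q else (\<lambda>_. 0)) z"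
    using N_pos by (simp add: sum_if_eq_conj)
  finally show "adj N (Xv N i j p) (Xv N k l q) z = \<dots>" .
qed

lemma eps_t_Xv: "eps_t N (Xv N i i s) =
  (if s mod N = 0 then (\<lambda>z. \<Sum>p\<in>{0..<N}. Xv N i i p z) else (\<lambda>_. 0))"
proof
  fix z
  have "eps_t N (Xv N i i s) z = (\<Sum>i0\<in>{0..<N}. \<Sum>a\<in>{0..<N}. \<Sum>b\<in>{0..<N}.
      eps N (hmult N (Xv N i0 i0 a) (Xv N i i s)) * Xv N (i0 + a) (i0 + a) b z)"
    unfolding eps_t_def by (simp add: mult.assoc sum_Delta_Hone_mult)
  also have "\<dots> = (\<Sum>i0\<in>{0..<N}. \<Sum>a\<in>{0..<N}. if a = s mod N \<and> i0 = i mod N \<and> s mod N = 0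
      then \<Sum>b\<in>{0..<N}. Xv N i i b z else 0)"
    by (intro sum.cong refl) (auto simp: hmult_Xv eps_Xv hmult_if_zero mod_add_eq intro!: sum.cong fun_cong[OF Xv_cong])
  also have "\<dots> = (if s mod N = 0 then (\<lambda>z. \<Sum>p\<in>{0..<N}. Xv N i i p z) else (\<lambda>_. 0)) z"
    using N_pos by (simp add: sum_if_eq_conj)
  finally show "eps_t N (Xv N i i s) z = \<dots>" .
qed

lemma bmult_Xv: "bmult N (Xv N i i p) (Xv N k k q) =
  (if i mod N = k mod N \<and> p mod N = q mod N then Xv N i i p else (\<lambda>_. 0))"
proof
  fix z
  have "bmult N (Xv N i i p) (Xv N k k q) z = (\<Sum>i0\<in>{0..<N}. \<Sum>a\<in>{0..<N}. \<Sum>b\<in>{0..<N}.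
      hmult N (adj N (Xv N i0 i0 a) (Xv N i i p)) (adj N (Xv N (i0 + a) (i0 + a) b) (Xv N k k q)) z)"
    unfolding bmult_def by (simp add: sum_Delta_Hone_mult)
  also have "\<dots> = (\<Sum>i0\<in>{0..<N}. \<Sum>a\<in>{0..<N}. \<Sum>b\<in>{0..<N}. if b = 0 \<and> a = 0 \<and> i0 = i mod N \<and>
      (i mod N = k mod N \<and> p mod N = q mod N) then Xv N i i p z else 0)"
    by (intro sum.cong refl) (auto simp: adj_Xv hmult_Xv hmult_if_zero intro: fun_cong[OF Xv_cong])
  also have "\<dots> = (if i mod N = k mod N \<and> p mod N = q mod N then Xv N i i p else (\<lambda>_. 0)) z"
    using N_pos by (simp add: sum_if_eq_conj)
  finally show "bmult N (Xv N i i p) (Xv N k k q) z = \<dots>" .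
qed

lemma bDelta_Xv: "bDelta N \<omega> (Xv N k k s) =
  (\<lambda>w. \<Sum>v\<in>{0..<N}. \<Sum>q\<in>{0..<N}.
     if (v + q) mod N = s mod N then tens (Xv N k k v) (Xv N k k q) w else 0)"
proof
  fix w
  have "bDelta N \<omega> (Xv N k k s) w = (\<Sum>(x1,x2)\<in>B N \<times> B N. Delta N (Xv N k k s) (x1,x2) *
     (\<Sum>(r1,r2)\<in>B N \<times> B N. Rmat N \<omega> (r1,r2) *
        tens (hmult N (Xb N x1) (Sant N (Xb N r2))) (adj N (Xb N r1) (Xb N x2)) w))"
    unfolding bDelta_def by (simp add: sum_distrib_left mult.assoc case_prod_beta)
  also have "\<dots> = (\<Sum>a\<in>{0..<N}. \<Sum>b\<in>{0..<N}. if (a + b) mod N = s mod N then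
     (\<Sum>i\<in>{0..<N}. \<Sum>j\<in>{0..<N}. \<Sum>p\<in>{0..<N}. \<omega> powi (- (p * (i - j))) *
       tens (hmult N (Xv N k k a) (Sant N (Xv N j (j + p) (i - j))))
         (adj N (Xv N i j p) (Xv N (k + a) (k + a) b)) w) else 0)"
    by (simp add: sum_Delta_Xv_mult sum_Rmat_mult cong: if_cong)
  also have "\<dots> = (\<Sum>a\<in>{0..<N}. \<Sum>b\<in>{0..<N}. if (a + b) mod N = s mod N then
     (\<Sum>i\<in>{0..<N}. \<Sum>j\<in>{0..<N}. \<Sum>p\<in>{0..<N}.
       if p = 0 \<and> j = (k + a) mod N \<and> i = k mod N then tens (Xv N k k a) (Xv N k k b) w else 0) else 0)"
  proof (intro sum.cong refl if_cong)
    fix a b i j p assume i: "i \<in> {0..<N}" and j: "j \<in> {0..<N}" and p: "p \<in> {0..<N}"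
    show "\<omega> powi (- (p * (i - j))) *
       tens (hmult N (Xv N k k a) (Sant N (Xv N j (j + p) (i - j))))
         (adj N (Xv N i j p) (Xv N (k + a) (k + a) b)) w =
      (if p = 0 \<and> j = (k + a) mod N \<and> i = k mod N then tens (Xv N k k a) (Xv N k k b) w else 0)"
      apply (simp only: hmult_Xv Sant_Xv adj_Xv tens_if_zero if_distribR if_zero_mult if_if_eq_conj)
      apply (rule if_zero_cong)
      subgoal
        unfolding residue_eq_iff_dvd[OF i] residue_eq_iff_dvd[OF j] residue_eq_0_iff_dvd[OF p]
          mod_eq_dvd_iff dvd_eq_mod_eq_0[symmetric]
        by (intro iffI conjI; elim conjE; (assumption | algebra | simp))
      subgoal
        by auto
      done
  qed
  also have "\<dots> = (\<Sum>v\<in>{0..<N}. \<Sum>q\<in>{0..<N}.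
     if (v + q) mod N = s mod N then tens (Xv N k k v) (Xv N k k q) w else 0)"
    using N_pos by (simp add: sum_if_eq_conj cong: if_cong)
  finally show "bDelta N \<omega> (Xv N k k s) w = \<dots>" .
qed

lemma bS_Xv:
  assumes root: "\<omega> ^ nat N = 1"
  shows "bS N \<omega> (Xv N k k s) = Xv N k k (- s)"
proof
  fix z
  have "bS N \<omega> (Xv N k k s) z = (\<Sum>(r1,r2)\<in>B N \<times> B N. Rmat N \<omega> (r1,r2) *
     (\<Sum>(s1,s2)\<in>B N \<times> B N. Rmat N \<omega> (s1,s2) *
        hmult N (hmult N (Xb N r2) (Xb N s2)) (Sant N (hmult N (hmult N (Xb N r1) (Xv N k k s)) (Sant N (Xb N s1)))) z))"
    unfolding bS_def by (simp add: sum_distrib_left mult.assoc case_prod_beta)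
  also have "\<dots> = (\<Sum>i\<in>{0..<N}. \<Sum>j\<in>{0..<N}. \<Sum>p\<in>{0..<N}.
      \<Sum>i'\<in>{0..<N}. \<Sum>j'\<in>{0..<N}. \<Sum>p'\<in>{0..<N}.
      \<omega> powi (- (p * (i - j))) * (\<omega> powi (- (p' * (i' - j'))) *
        hmult N (hmult N (Xv N j (j + p) (i - j)) (Xv N j' (j' + p') (i' - j')))
          (Sant N (hmult N (hmult N (Xv N i j p) (Xv N k k s)) (Sant N (Xv N i' j' p')))) z))"
    by (simp only: sum_Rmat_mult) (simp add: sum_distrib_left)
  also have "\<dots> = (\<Sum>i\<in>{0..<N}. \<Sum>j\<in>{0..<N}. \<Sum>p\<in>{0..<N}.
      \<Sum>i'\<in>{0..<N}. \<Sum>j'\<in>{0..<N}. \<Sum>p'\<in>{0..<N}.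
      if p' = (- s) mod N \<and> j' = (k + s) mod N \<and> i' = k mod N \<and>
         p = s mod N \<and> j = k mod N \<and> i = (k - s) mod N
      then Xv N k k (- s) z else 0)"
  proof (intro sum.cong refl)
    fix i j p i' j' p'
    assume i: "i \<in> {0..<N}" and j: "j \<in> {0..<N}" and p: "p \<in> {0..<N}"
      and i': "i' \<in> {0..<N}" and j': "j' \<in> {0..<N}" and p': "p' \<in> {0..<N}"
    show "\<omega> powi (- (p * (i - j))) * (\<omega> powi (- (p' * (i' - j'))) *
        hmult N (hmult N (Xv N j (j + p) (i - j)) (Xv N j' (j' + p') (i' - j')))
          (Sant N (hmult N (hmult N (Xv N i j p) (Xv N k k s)) (Sant N (Xv N i' j' p')))) z) =
      (if p' = (- s) mod N \<and> j' = (k + s) mod N \<and> i' = k mod N \<and>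
         p = s mod N \<and> j = k mod N \<and> i = (k - s) mod N
      then Xv N k k (- s) z else 0)"
      apply (simp only: hmult_Xv Sant_Xv hmult_if_zero Sant_if_zero if_distribR if_zero_mult if_if_eq_conj)
      apply (rule if_zero_cong)
      subgoal
        unfolding residue_eq_iff_dvd[OF i] residue_eq_iff_dvd[OF j] residue_eq_iff_dvd[OF p]
          residue_eq_iff_dvd[OF i'] residue_eq_iff_dvd[OF j'] residue_eq_iff_dvd[OF p'] mod_eq_dvd_iff
        by (intro iffI conjI; elim conjE; (assumption | algebra | simp))
      subgoal premises Q
      proof -
        have dvd: "N dvd p' + s" "N dvd j' - (k + s)" "N dvd i' - k"
            "N dvd p - s" "N dvd j - k" "N dvd i - (k - s)"
          using Q unfolding residue_eq_iff_dvd[OF i] residue_eq_iff_dvd[OF j] residue_eq_iff_dvd[OF p]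
            residue_eq_iff_dvd[OF i'] residue_eq_iff_dvd[OF j'] residue_eq_iff_dvd[OF p'] by simp_all
        have "\<omega> \<noteq> 0"
          using root N_pos by (auto simp: zero_power)
        then have "\<omega> powi (- (p * (i - j))) * \<omega> powi (- (p' * (i' - j'))) =
            \<omega> powi (- (p * (i - j)) + - (p' * (i' - j')))"
          by (intro power_int_add[symmetric]) simp
        also have "\<dots> = 1"
          using dvd by (intro power_int_eq_1_if_dvd[OF N_pos root]) algebra
        finally have phase: "\<omega> powi (- (p * (i - j))) * \<omega> powi (- (p' * (i' - j'))) = 1" .
        have "Xv N j (i + p) (i - j) = Xv N k k (- s)"
          by (insert dvd, intro Xv_cong; unfold mod_eq_dvd_iff; (assumption | algebra))
        with phase show ?thesis
          by (simp add: mult.assoc[symmetric])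
      qed
      done
  qed
  also have "\<dots> = Xv N k k (- s) z"
    using N_pos by (simp add: sum_if_eq_conj)
  finally show "bS N \<omega> (Xv N k k s) z = Xv N k k (- s) z" .
qed

lemma sum_residue_pairs_delta:
  fixes d :: "int \<Rightarrow> int \<Rightarrow> complex" and F :: "int \<Rightarrow> int \<Rightarrow> hvec"
  assumes "i \<in> {0..<N}" and "p \<in> {0..<N}"
  shows "(\<Sum>k\<in>{0..<N}. \<Sum>q\<in>{0..<N}. d k q *
      (if i mod N = k mod N \<and> p mod N = q mod N then F k q else (\<lambda>_. 0)) z) = d i p * F i p z"
      (is "?L1 = ?R")
    and "(\<Sum>k\<in>{0..<N}. \<Sum>q\<in>{0..<N}. d k q *
      (if k mod N = i mod N \<and> q mod N = p mod N then F k q else (\<lambda>_. 0)) z) = d i p * F i p z"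
      (is "?L2 = _")
proof -
  have "?L1 = (\<Sum>k\<in>{0..<N}. \<Sum>q\<in>{0..<N}. if q = p \<and> k = i then d k q * F k q z else 0)"
    and "?L2 = (\<Sum>k\<in>{0..<N}. \<Sum>q\<in>{0..<N}. if q = p \<and> k = i then d k q * F k q z else 0)"
    using assms by (auto intro!: sum.cong)
  then show "?L1 = ?R" and "?L2 = ?R"
    using assms by (simp_all add: sum_if_eq_conj)
qed

lemma hmult_diag_diag: "hmult N (diag N c) (diag N d) = diag N (\<lambda>i p. c i p * d i p)"
  unfolding diag_def
  by (simp only: hmult_sum_left hmult_scale_left hmult_sum_right hmult_scale_right hmult_Xv)
    (intro ext sum.cong refl, simp only: sum_residue_pairs_delta(1) mult.assoc)

lemma bmult_diag_diag: "bmult N (diag N c) (diag N d) = diag N (\<lambda>i p. c i p * d i p)"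
  unfolding diag_def
  by (simp only: bmult_sum_left bmult_scale_left bmult_sum_right bmult_scale_right bmult_Xv)
    (intro ext sum.cong refl, simp only: sum_residue_pairs_delta(1) mult.assoc)

lemma diag_in_Hsp: "diag N c \<in> Hsp N"
  using Xv_in_Hsp unfolding Hsp_def diag_def by simp

lemma diag_cong:
  "(\<And>i p. i \<in> {0..<N} \<Longrightarrow> p \<in> {0..<N} \<Longrightarrow> c i p = d i p) \<Longrightarrow> diag N c = diag N d"
  unfolding diag_def by (intro ext sum.cong refl) auto

lemma eps_s_eq_diag:
  "eps_s N h = diag N (\<lambda>i a. \<Sum>b\<in>{0..<N}. eps N (hmult N h (Xv N (i + a) (i + a) b)))"
proof
  fix z
  have "eps_s N h z = (\<Sum>(x,y)\<in>B N \<times> B N. Delta N (Hone N) (x,y) * (eps N (hmult N h (Xb N y)) * Xb N x z))"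
    unfolding eps_s_def by (simp add: mult.assoc)
  also have "\<dots> = diag N (\<lambda>i a. \<Sum>b\<in>{0..<N}. eps N (hmult N h (Xv N (i + a) (i + a) b))) z"
    unfolding sum_Delta_Hone_mult diag_def by (simp add: sum_distrib_left mult.commute)
  finally show "eps_s N h z = \<dots>" .
qed

lemma Hs_subset_range_diag: "Hs N \<subseteq> range (diag N)"
  unfolding Hs_def using eps_s_eq_diag by blast

lemma eps_s_Xv_0_m_0: "eps_s N (Xv N 0 m 0) = diag N (\<lambda>i a. if (i + a) mod N = m mod N then 1 else 0)"
  unfolding eps_s_eq_diag
proof (rule diag_cong)
  fix i a
  have "(\<Sum>b\<in>{0..<N}. eps N (hmult N (Xv N 0 m 0) (Xv N (i + a) (i + a) b)))
     = (\<Sum>b\<in>{0..<N}. if b = 0 \<and> (i + a) mod N = m mod N then 1 else 0)"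
    by (intro sum.cong refl) (auto simp: hmult_Xv eps_Xv)
  then show "(\<Sum>b\<in>{0..<N}. eps N (hmult N (Xv N 0 m 0) (Xv N (i + a) (i + a) b)))
     = (if (i + a) mod N = m mod N then 1 else 0)"
    using N_pos by (simp add: sum_if_eq_conj)
qed

lemma sum_B_Xb_mult: "(\<Sum>x\<in>B N. f x * Xb N x z) = (if z \<in> B N then f z else 0)"
proof -
  have "(\<Sum>x\<in>B N. f x * Xb N x z) = (\<Sum>x\<in>B N. if x = z then f z else 0)"
    by (intro sum.cong refl) (auto simp: B_def Xb_def Xv_def)
  then show ?thesis by simp
qed

lemma Hsp_expand: "a \<in> Hsp N \<Longrightarrow> a = (\<lambda>z. \<Sum>x\<in>B N. a x * Xb N x z)"
  by (rule ext) (auto simp: sum_B_Xb_mult Hsp_def)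

lemma hmult_Xv_diag:
  assumes "j \<in> {0..<N}" and "p \<in> {0..<N}"
  shows "hmult N (Xv N i j p) (diag N e) = (\<lambda>z. e j p * Xv N i j p z)"
  unfolding diag_def
  by (simp only: hmult_sum_right hmult_scale_right hmult_Xv) (intro ext sum_residue_pairs_delta(1)[OF assms])

lemma hmult_diag_Xv:
  assumes "i \<in> {0..<N}" and "p \<in> {0..<N}"
  shows "hmult N (diag N e) (Xv N i j p) = (\<lambda>z. e i p * Xv N i j p z)"
  unfolding diag_def
  by (simp only: hmult_sum_left hmult_scale_left hmult_Xv) (intro ext sum_residue_pairs_delta(2)[OF assms])

lemma hmult_diag_right_apply:
  assumes a: "a \<in> Hsp N" and z: "(i, j, p) \<in> B N"
  shows "hmult N a (diag N e) (i, j, p) = a (i, j, p) * e j p"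
proof -
  have "hmult N a (diag N e) (i, j, p) = (\<Sum>x\<in>B N. a x * hmult N (Xb N x) (diag N e) (i, j, p))"
    by (subst Hsp_expand[OF a]) (simp only: hmult_sum_left hmult_scale_left)
  also have "\<dots> = (\<Sum>x\<in>B N. (a x * e (fst (snd x)) (snd (snd x))) * Xb N x (i, j, p))"
    by (intro sum.cong refl) (auto simp: B_def Xb_def hmult_Xv_diag)
  also have "\<dots> = a (i, j, p) * e j p"
    using z by (simp add: sum_B_Xb_mult)
  finally show ?thesis .
qed

lemma hmult_diag_left_apply:
  assumes a: "a \<in> Hsp N" and z: "(i, j, p) \<in> B N"
  shows "hmult N (diag N e) a (i, j, p) = e i p * a (i, j, p)"
proof -
  have "hmult N (diag N e) a (i, j, p) = (\<Sum>x\<in>B N. a x * hmult N (diag N e) (Xb N x) (i, j, p))"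
    by (subst Hsp_expand[OF a]) (simp only: hmult_sum_right hmult_scale_right)
  also have "\<dots> = (\<Sum>x\<in>B N. (e (fst x) (snd (snd x)) * a x) * Xb N x (i, j, p))"
    by (intro sum.cong refl) (auto simp: B_def Xb_def hmult_diag_Xv)
  also have "\<dots> = e i p * a (i, j, p)"
    using z by (simp add: sum_B_Xb_mult)
  finally show ?thesis .
qed

lemma diag_in_RH: "diag N c \<in> RH N"
  unfolding RH_def
proof (intro CollectI conjI ballI)
  show "diag N c \<in> Hsp N" by (rule diag_in_Hsp)
  fix y assume "y \<in> Hs N"
  then obtain d where "y = diag N d" using Hs_subset_range_diag by blast
  then show "hmult N (diag N c) y = hmult N y (diag N c)"
    by (simp add: hmult_diag_diag mult.commute)
qed

lemma RH_entry_off_diagonal: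
  assumes a: "a \<in> RH N" and z: "(i, j, p) \<in> B N" and "i \<noteq> j"
  shows "a (i, j, p) = 0"
proof -
  define e where "e = (\<lambda>i' a'. if (i' + a') mod N = (i + p) mod N then (1::complex) else 0)"
  have "eps_s N (Xv N 0 (i + p) 0) \<in> Hs N"
    unfolding Hs_def using Xv_in_Hsp by blast
  then have "hmult N a (diag N e) = hmult N (diag N e) a"
    using a unfolding RH_def eps_s_Xv_0_m_0 e_def by blast
  moreover have "a \<in> Hsp N"
    using a unfolding RH_def by blast
  ultimately have "a (i, j, p) * e j p = e i p * a (i, j, p)"
    using hmult_diag_right_apply[OF _ z] hmult_diag_left_apply[OF _ z] by metis
  moreover have "j mod N \<noteq> i mod N"
    using z \<open>i \<noteq> j\<close> by (simp add: B_def)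
  then have "(j + p) mod N \<noteq> (i + p) mod N"
    by (simp add: mod_eq_dvd_iff)
  ultimately show ?thesis
    unfolding e_def by simp
qed

lemma diag_apply: "diag N c (i, j, p) = (if (i, j, p) \<in> B N \<and> i = j then c i p else 0)"
proof -
  have "diag N c (i, j, p) = (\<Sum>i'\<in>{0..<N}. \<Sum>p'\<in>{0..<N}.
      if p' = p \<and> i' = i \<and> (i, j, p) \<in> B N \<and> i = j then c i' p' else 0)"
    unfolding diag_def by (intro sum.cong refl) (auto simp: B_def Xv_def)
  then show ?thesis
    by (simp add: sum_if_eq_conj B_def)
qed

lemma RH_eq_diag_entries:
  assumes a: "a \<in> RH N"
  shows "a = diag N (\<lambda>i p. a (i, i, p))"
proof
  fix z :: lbl
  obtain i j p where z: "z = (i, j, p)" by (cases z)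
  have "a \<in> Hsp N" using a unfolding RH_def by blast
  then show "a z = diag N (\<lambda>i p. a (i, i, p)) z"
    using RH_entry_off_diagonal[OF a] unfolding z diag_apply Hsp_def by (cases "(i, j, p) \<in> B N") auto
qed

lemma RH_eq_diag_span: "RH N = diag_span N"
  unfolding diag_span_eq_range_diag using RH_eq_diag_entries diag_in_RH by blast

lemma bmult_Hone_RH:
  assumes "a \<in> RH N"
  shows "bmult N (Hone N) a = a" and "bmult N a (Hone N) = a"
proof -
  obtain c where "a = diag N c"
    using RH_eq_diag_entries[OF assms] by blast
  then show "bmult N (Hone N) a = a" and "bmult N a (Hone N) = a"
    by (simp_all add: Hone_eq_diag bmult_diag_diag)
qed

end

theorem lemma4p1:
  fixes N :: int and \<omega> :: complex
  assumes "N \<ge> 2"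
    and "\<omega> ^ nat N = 1"
    and "\<forall>k::nat. 0 < k \<and> k < nat N \<longrightarrow> \<omega> ^ k \<noteq> 1"
  shows "RH N = diag_span N
    \<and> (\<forall>i p k q. bmult N (Xv N i i p) (Xv N k k q) =
         (if i mod N = k mod N \<and> p mod N = q mod N then Xv N i i p else (\<lambda>_. 0)))
    \<and> Hone N = (\<lambda>z. \<Sum>i\<in>{0..<N}. \<Sum>p\<in>{0..<N}. Xv N i i p z)
    \<and> (\<forall>a\<in>RH N. bmult N (Hone N) a = a \<and> bmult N a (Hone N) = a)
    \<and> (\<forall>k s. bDelta N \<omega> (Xv N k k s) =
         (\<lambda>w. \<Sum>v\<in>{0..<N}. \<Sum>q\<in>{0..<N}.
            if (v + q) mod N = s mod N then tens (Xv N k k v) (Xv N k k q) w else 0))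
    \<and> (\<forall>i s. eps_t N (Xv N i i s) =
         (if s mod N = 0 then (\<lambda>z. \<Sum>p\<in>{0..<N}. Xv N i i p z) else (\<lambda>_. 0)))
    \<and> (\<forall>k s. bS N \<omega> (Xv N k k s) = Xv N k k (- s))"
proof -
  interpret face_algebra N
    using assms(1) by unfold_locales simp
  show ?thesis
    using RH_eq_diag_span bmult_Xv bmult_Hone_RH bDelta_Xv eps_t_Xv bS_Xv[OF assms(2)]
    by (simp add: Hone_def)
qed

end
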